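(* Given a family of smooth vector fields $(f_a:a\in A)$ on $\mathbb{R}^e$, there exists a linear map $\hat f:T_\omega(A)\to\mathrm{Vect}^\infty(\mathbb{R}^e)$ whose restriction to $\hat{\mathcal{L}}(A)$ is the unique Lie algebra morphism $\hat{\mathcal{L}}(A)\to\mathrm{Vect}^\infty(\mathbb{R}^e)$ satisfying $\hat f(\Psi_H^*(a))=f_a$ for all $a\in A$. Explicitly, $\hat f=f\circ\Phi_H^*$, i.e. $\hat f_{\mathbf{x}}=f_{\Phi_H^*\mathbf{x}}$.
   Context: Alphabet $A$ with commutative associative bracket $\{\cdot,\cdot\}$ on $A\cup\{0\}$ ($\{a,0\}=0$) and weight $\omega:A\to\{1,2,\dots\}$ additive on nonzero brackets, with finitely many letters of each weight; iterated bracket $\{a_1\cdots a_n\}$. $T_\omega(A)$: finite linear combinations of words (incl. empty word $\mathbf{1}$), concatenation $\otimes$, words orthonormal for $\langle\cdot,\cdot\rangle$. Hoffman adjoints $\Phi^*_H,\Psi^*_H:T_\omega(A)\to T_\omega(A)$: concatenation-multiplicative, $\Phi^*_H(a)=\sum_{n\ge1}\sum_{\{a_1\cdots a_n\}=a}\frac1{n!}a_1\cdots a_n$, $\Psi^*_H(a)=\sum_{n\ge1}\sum_{\{a_1\cdots a_n\}=a}\frac{(-1)^{n-1}}na_1\cdots a_n$; they are mutually inverse. $\mathcal{L}(A)$: Lie subalgebra of $(T_\omega(A),[x,y]=x\otimes y-y\otimes x)$ generated by the letters; $\hat{\mathcal{L}}(A):=\Psi^*_H\mathcal{L}(A)$ with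 the same bracket. $\mathrm{Vect}^\infty(\mathbb{R}^e)$: smooth vector fields, with $g\vartriangleright h:=g^i(\partial_ih^j)\partial_j$ and Lie bracket $[g,h]:=g\vartriangleright h-h\vartriangleright g$. The map $f:T_\omega(A)\to\mathrm{Vect}^\infty(\mathbb{R}^e)$ is linear with $f_{\mathbf{1}}=\mathrm{id}$, $f_{a_1\cdots a_n}=f_{a_1}\vartriangleright(\cdots\vartriangleright(f_{a_{n-1}}\vartriangleright f_{a_n})\cdots)$. *)

theory Defs
  imports "HOL-Analysis.Analysis"
begin

text \<open>The bracket on A \<union> {0} is encoded as br :: 'a => 'a => 'a option,
  None playing the role of 0 (so {a,0} = 0 is built in).\<close>

definition bracket_comm :: "('a \<Rightarrow> 'a \<Rightarrow> 'a option) \<Rightarrow> bool" where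
  "bracket_comm br \<longleftrightarrow> (\<forall>a b. br a b = br b a)"

definition bracket_assoc :: "('a \<Rightarrow> 'a \<Rightarrow> 'a option) \<Rightarrow> bool" where
  "bracket_assoc br \<longleftrightarrow> (\<forall>a b c.
     (case br a b of None \<Rightarrow> None | Some d \<Rightarrow> br d c) =
     (case br b c of None \<Rightarrow> None | Some d \<Rightarrow> br a d))"

definition weight_ok :: "('a \<Rightarrow> 'a \<Rightarrow> 'a option) \<Rightarrow> ('a \<Rightarrow> nat) \<Rightarrow> bool" where
  "weight_ok br \<omega> \<longleftrightarrow> (\<forall>a. 1 \<le> \<omega> a)
     \<and> (\<forall>a b c. br a b = Some c \<longrightarrow> \<omega> c = \<omega> a + \<omega> b)
     \<and> (\<forall>n. finite {a. \<omega> a = n})"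

fun ibr :: "('a \<Rightarrow> 'a \<Rightarrow> 'a option) \<Rightarrow> 'a list \<Rightarrow> 'a option" where
  "ibr br [] = None"
| "ibr br [a] = Some a"
| "ibr br (a # b # w) = (case ibr br (b # w) of None \<Rightarrow> None | Some c \<Rightarrow> br a c)"

section \<open>T_omega(A): finitely supported real functions on words\<close>

definition Tset :: "('a list \<Rightarrow> real) set" where
  "Tset = {x. finite {w. x w \<noteq> 0}}"

definition word :: "'a list \<Rightarrow> ('a list \<Rightarrow> real)" where
  "word v = (\<lambda>w. if w = v then 1 else 0)"

definition tadd :: "('a list \<Rightarrow> real) \<Rightarrow> ('a list \<Rightarrow> real) \<Rightarrow> ('a list \<Rightarrow> real)" where
  "tadd x y = (\<lambda>w. x w + y w)"

definition tscale :: "real \<Rightarrow> ('a list \<Rightarrow> real) \<Rightarrow> ('a list \<Rightarrow> real)" where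
  "tscale c x = (\<lambda>w. c * x w)"

definition conc :: "('a list \<Rightarrow> real) \<Rightarrow> ('a list \<Rightarrow> real) \<Rightarrow> ('a list \<Rightarrow> real)" where
  "conc x y = (\<lambda>w. \<Sum>i\<le>length w. x (take i w) * y (drop i w))"

definition commutator :: "('a list \<Rightarrow> real) \<Rightarrow> ('a list \<Rightarrow> real) \<Rightarrow> ('a list \<Rightarrow> real)" where
  "commutator x y = (\<lambda>w. conc x y w - conc y x w)"

definition phiL :: "('a \<Rightarrow> 'a \<Rightarrow> 'a option) \<Rightarrow> 'a \<Rightarrow> ('a list \<Rightarrow> real)" where
  "phiL br a = (\<lambda>w. if ibr br w = Some a then 1 / fact (length w) else 0)"

definition psiL :: "('a \<Rightarrow> 'a \<Rightarrow> 'a option) \<Rightarrow> 'a \<Rightarrow> ('a list \<Rightarrow> real)" where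
  "psiL br a = (\<lambda>w. if ibr br w = Some a
                      then (-1) ^ (length w - 1) / real (length w) else 0)"

definition mult_ext_word :: "('a \<Rightarrow> ('a list \<Rightarrow> real)) \<Rightarrow> 'a list \<Rightarrow> ('a list \<Rightarrow> real)" where
  "mult_ext_word L v = foldr (\<lambda>a acc. conc (L a) acc) v (word [])"

definition mult_ext :: "('a \<Rightarrow> ('a list \<Rightarrow> real)) \<Rightarrow> ('a list \<Rightarrow> real) \<Rightarrow> ('a list \<Rightarrow> real)" where
  "mult_ext L x = (\<lambda>w. \<Sum>v\<in>{v. x v \<noteq> 0}. x v * mult_ext_word L v w)"

definition PhiH :: "('a \<Rightarrow> 'a \<Rightarrow> 'a option) \<Rightarrow> ('a list \<Rightarrow> real) \<Rightarrow> ('a list \<Rightarrow> real)" where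
  "PhiH br = mult_ext (phiL br)"

definition PsiH :: "('a \<Rightarrow> 'a \<Rightarrow> 'a option) \<Rightarrow> ('a list \<Rightarrow> real) \<Rightarrow> ('a list \<Rightarrow> real)" where
  "PsiH br = mult_ext (psiL br)"

inductive_set LieA :: "('a list \<Rightarrow> real) set" where
  gen: "word [a] \<in> LieA"
| add: "x \<in> LieA \<Longrightarrow> y \<in> LieA \<Longrightarrow> tadd x y \<in> LieA"
| scale: "x \<in> LieA \<Longrightarrow> tscale c x \<in> LieA"
| brk: "x \<in> LieA \<Longrightarrow> y \<in> LieA \<Longrightarrow> commutator x y \<in> LieA"

definition LieHat :: "('a \<Rightarrow> 'a \<Rightarrow> 'a option) \<Rightarrow> ('a list \<Rightarrow> real) set" where
  "LieHat br = PsiH br ` LieA"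

fun Ck :: "nat \<Rightarrow> ('a::euclidean_space \<Rightarrow> 'b::euclidean_space) \<Rightarrow> bool" where
  "Ck 0 h = continuous_on UNIV h"
| "Ck (Suc k) h = ((\<forall>x. h differentiable (at x))
      \<and> (\<forall>v\<in>Basis. Ck k (\<lambda>x. frechet_derivative h (at x) v)))"

definition smooth_vf :: "(real^'e \<Rightarrow> real^'e) \<Rightarrow> bool" where
  "smooth_vf h \<longleftrightarrow> (\<forall>k. Ck k h)"

text \<open>(g |> h)(x) = sum_i g^i(x) (d_i h)(x) = Dh(x)(g(x)).\<close>
definition vf_act :: "(real^'e \<Rightarrow> real^'e) \<Rightarrow> (real^'e \<Rightarrow> real^'e) \<Rightarrow> (real^'e \<Rightarrow> real^'e)" where
  "vf_act g h = (\<lambda>x. frechet_derivative h (at x) (g x))"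

definition vf_bracket :: "(real^'e \<Rightarrow> real^'e) \<Rightarrow> (real^'e \<Rightarrow> real^'e) \<Rightarrow> (real^'e \<Rightarrow> real^'e)" where
  "vf_bracket g h = (\<lambda>x. vf_act g h x - vf_act h g x)"

fun fW :: "('a \<Rightarrow> real^'e \<Rightarrow> real^'e) \<Rightarrow> 'a list \<Rightarrow> (real^'e \<Rightarrow> real^'e)" where
  "fW F [] = id"
| "fW F [a] = F a"
| "fW F (a # b # w) = vf_act (F a) (fW F (b # w))"

definition fT :: "('a \<Rightarrow> real^'e \<Rightarrow> real^'e) \<Rightarrow> ('a list \<Rightarrow> real) \<Rightarrow> (real^'e \<Rightarrow> real^'e)" where
  "fT F x = (\<lambda>p. \<Sum>v\<in>{v. x v \<noteq> 0}. x v *\<^sub>R fW F v p)"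

definition fhat :: "('a \<Rightarrow> 'a \<Rightarrow> 'a option) \<Rightarrow> ('a \<Rightarrow> real^'e \<Rightarrow> real^'e)
                   \<Rightarrow> ('a list \<Rightarrow> real) \<Rightarrow> (real^'e \<Rightarrow> real^'e)" where
  "fhat br F x = fT F (PhiH br x)"

definition linear_on_T :: "(('a list \<Rightarrow> real) \<Rightarrow> (real^'e \<Rightarrow> real^'e)) \<Rightarrow> ('a list \<Rightarrow> real) set \<Rightarrow> bool" where
  "linear_on_T g S \<longleftrightarrow>
     (\<forall>x\<in>S. \<forall>y\<in>S. g (tadd x y) = (\<lambda>p. g x p + g y p))
   \<and> (\<forall>c. \<forall>x\<in>S. g (tscale c x) = (\<lambda>p. c *\<^sub>R g x p))"

definition lie_morph_on :: "(('a list \<Rightarrow> real) \<Rightarrow> (real^'e \<Rightarrow> real^'e)) \<Rightarrow> ('a list \<Rightarrow> real) set \<Rightarrow> bool" where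
  "lie_morph_on g S \<longleftrightarrow> linear_on_T g S
   \<and> (\<forall>x\<in>S. smooth_vf (g x))
   \<and> (\<forall>x\<in>S. \<forall>y\<in>S. g (commutator x y) = vf_bracket (g x) (g y))"

end

theory Submission
  imports Defs "HOL-Computational_Algebra.Formal_Power_Series"
begin

(* For a power series f with f_0 = 0, let Phi_f be the concatenation-multiplicative map sending
   a letter a to the sum of f_n w over the words w of length n with {w} = a; thus
   Phi_H^* = Phi_(e^X - 1) and Psi_H^* = Phi_(log(1 + X)). Associativity of the bracket gives
   Phi_f (Phi_g a) = Phi_(g o f) a, so Phi_H^* o Psi_H^* = Phi_X is the identity and
   hat f o Psi_H^* = f. It remains to see that f is a Lie morphism on L(A). For a Lie polynomial x,
   the operator k |-> sum_w x_w f_(w_1) |> (... |> (f_(w_n) |> k)) equals k |-> f_x |> k, by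
   induction on x; the bracket case is the identity [g, h] |> k = g |> (h |> k) - h |> (g |> k),
   in which the second derivatives of k cancel by Schwarz's theorem. Taking k = id gives
   f_[x,y] = [f_x, f_y]. Uniqueness holds because hat L(A) is generated by the Psi_H^*(a). *)

section \<open>Smooth functions and directional derivatives\<close>

abbreviation dir_deriv :: "('a::euclidean_space \<Rightarrow> 'b::euclidean_space) \<Rightarrow> 'a \<Rightarrow> 'a \<Rightarrow> 'b" where
  "dir_deriv h v \<equiv> (\<lambda>x. frechet_derivative h (at x) v)"

lemma has_derivative_frechet_derivative:
  "h differentiable (at x) \<Longrightarrow> (h has_derivative frechet_derivative h (at x)) (at x)"
  using frechet_derivative_works by blast

lemma Ck_imp_continuous_on: "Ck k h \<Longrightarrow> continuous_on UNIV h"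
  by (cases k) (auto intro!: differentiable_imp_continuous_on simp: differentiable_on_def)

lemma Ck_Suc_imp_Ck: "Ck (Suc k) h \<Longrightarrow> Ck k h"
  by (induction k arbitrary: h) (auto intro!: differentiable_imp_continuous_on simp: differentiable_on_def)

lemma Ck_const: "Ck k (\<lambda>x. c)"
  by (induction k arbitrary: c) auto

lemma Ck_ident: "Ck k (\<lambda>x. x)"
  by (cases k) (auto simp: Ck_const)

lemma frechet_derivative_bounded_linear_compose:
  assumes "bounded_linear L" and "h differentiable (at x)"
  shows "frechet_derivative (\<lambda>x. L (h x)) (at x) = (\<lambda>y. L (frechet_derivative h (at x) y))"
  by (rule frechet_derivative_at[symmetric] bounded_linear.has_derivative
      has_derivative_frechet_derivative assms)+

lemma Ck_bounded_linear_compose: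
  assumes L: "bounded_linear L" shows "Ck k h \<Longrightarrow> Ck k (\<lambda>x. L (h x))"
proof (induction k arbitrary: h)
  case 0 thus ?case
    using L by (auto intro!: continuous_on_compose2[OF linear_continuous_on[OF L]])
next
  case (Suc k)
  have "(\<lambda>x. L (h x)) differentiable (at x)" for x
    using bounded_linear.has_derivative[OF L has_derivative_frechet_derivative[of h x]] Suc.prems
    by (auto simp: differentiable_def)
  thus ?case using Suc by (simp add: frechet_derivative_bounded_linear_compose[OF L])
qed

lemma Ck_add: "Ck k f \<Longrightarrow> Ck k g \<Longrightarrow> Ck k (\<lambda>x. f x + g x)"
proof (induction k arbitrary: f g)
  case 0 thus ?case by (auto intro: continuous_on_add)
next
  case (Suc k)
  have "frechet_derivative (\<lambda>x. f x + g x) (at x)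
      = (\<lambda>y. frechet_derivative f (at x) y + frechet_derivative g (at x) y)" for x
    by (rule frechet_derivative_at[symmetric], rule has_derivative_add;
        rule has_derivative_frechet_derivative) (use Suc.prems in simp)+
  thus ?case using Suc by simp
qed

lemma Ck_sum: "(\<And>i. i \<in> S \<Longrightarrow> Ck k (f i)) \<Longrightarrow> Ck k (\<lambda>x. \<Sum>i\<in>S. f i x)"
  by (induction S rule: infinite_finite_induct) (auto intro: Ck_add Ck_const)

lemma Ck_scaleR: "Ck k f \<Longrightarrow> Ck k g \<Longrightarrow> Ck k (\<lambda>x. f x *\<^sub>R g x)"
proof (induction k arbitrary: f g)
  case 0 thus ?case by (auto intro: continuous_on_scaleR)
next
  case (Suc k)
  have "frechet_derivative (\<lambda>x. f x *\<^sub>R g x) (at x)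
      = (\<lambda>y. f x *\<^sub>R frechet_derivative g (at x) y + frechet_derivative f (at x) y *\<^sub>R g x)" for x
    by (rule frechet_derivative_at[symmetric], rule has_derivative_scaleR;
        rule has_derivative_frechet_derivative) (use Suc.prems in simp)+
  moreover have "(\<lambda>x. f x *\<^sub>R g x) differentiable (at x)" for x
    using Suc.prems by (auto intro: differentiable_scaleR)
  ultimately show ?case
    using Suc by (auto intro!: Ck_add Suc.IH intro: Ck_Suc_imp_Ck)
qed

lemma has_real_derivative_along_line:
  fixes f :: "'a::euclidean_space \<Rightarrow> real"
  assumes "\<forall>x. f differentiable at x"
  shows "((\<lambda>s. f (q + s *\<^sub>R u)) has_real_derivative dir_deriv f u (q + s *\<^sub>R u)) (at s)"
proof -
  have "((\<lambda>s. q + s *\<^sub>R u) has_derivative (\<lambda>s. s *\<^sub>R u)) (at s)"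
    by (auto intro!: derivative_eq_intros)
  from diff_chain_at[OF this has_derivative_frechet_derivative]
  have "((f \<circ> (\<lambda>s. q + s *\<^sub>R u)) has_derivative
          (frechet_derivative f (at (q + s *\<^sub>R u)) \<circ> (\<lambda>s. s *\<^sub>R u))) (at s)"
    using assms by blast
  moreover have "frechet_derivative f (at (q + s *\<^sub>R u)) \<circ> (\<lambda>s. s *\<^sub>R u)
      = (*) (dir_deriv f u (q + s *\<^sub>R u))"
    using linear_frechet_derivative[of f "at (q + s *\<^sub>R u)"] assms
    by (auto simp: fun_eq_iff linear_cmul)
  ultimately show ?thesis by (simp add: has_field_derivative_def o_def)
qed

lemma second_difference_mean_value:
  fixes f :: "'a::euclidean_space \<Rightarrow> real"
  assumes df: "\<forall>x. f differentiable at x" and dfu: "\<forall>x. dir_deriv f u differentiable at x"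
    and t: "t > 0"
  obtains \<sigma> \<tau> where "0 < \<sigma>" "\<sigma> < t" "0 < \<tau>" "\<tau> < t"
    "f (p + t *\<^sub>R u + t *\<^sub>R v) - f (p + t *\<^sub>R u) - f (p + t *\<^sub>R v) + f p
       = t * t * dir_deriv (dir_deriv f u) v (p + \<sigma> *\<^sub>R u + \<tau> *\<^sub>R v)"
proof -
  define \<psi> where "\<psi> s = f ((p + t *\<^sub>R v) + s *\<^sub>R u) - f (p + s *\<^sub>R u)" for s
  define \<psi>' where "\<psi>' s = dir_deriv f u ((p + t *\<^sub>R v) + s *\<^sub>R u) - dir_deriv f u (p + s *\<^sub>R u)" for s
  have "DERIV \<psi> s :> \<psi>' s" for s
    unfolding \<psi>_def \<psi>'_def by (intro DERIV_diff has_real_derivative_along_line df)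
  then obtain \<sigma> where \<sigma>: "0 < \<sigma>" "\<sigma> < t" and mvt1: "\<psi> t - \<psi> 0 = (t - 0) * \<psi>' \<sigma>"
    using MVT2[OF t, of \<psi> \<psi>'] by blast
  define \<phi> where "\<phi> r = dir_deriv f u ((p + \<sigma> *\<^sub>R u) + r *\<^sub>R v)" for r
  have "DERIV \<phi> r :> dir_deriv (dir_deriv f u) v ((p + \<sigma> *\<^sub>R u) + r *\<^sub>R v)" for r
    unfolding \<phi>_def by (intro has_real_derivative_along_line dfu)
  then obtain \<tau> where \<tau>: "0 < \<tau>" "\<tau> < t"
    and mvt2: "\<phi> t - \<phi> 0 = (t - 0) * dir_deriv (dir_deriv f u) v ((p + \<sigma> *\<^sub>R u) + \<tau> *\<^sub>R v)"
    using MVT2[OF t, of \<phi> "\<lambda>r. dir_deriv (dir_deriv f u) v ((p + \<sigma> *\<^sub>R u) + r *\<^sub>R v)"] by blast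
  have "\<psi>' \<sigma> = \<phi> t - \<phi> 0"
    unfolding \<psi>'_def \<phi>_def by (simp add: algebra_simps)
  moreover have "\<psi> t - \<psi> 0 = f (p + t *\<^sub>R u + t *\<^sub>R v) - f (p + t *\<^sub>R u) - f (p + t *\<^sub>R v) + f p"
    unfolding \<psi>_def by (simp add: algebra_simps)
  ultimately show ?thesis
    using mvt1 mvt2 \<sigma> \<tau> that by simp
qed

lemma continuous_on_near_small_shifts:
  fixes g :: "'a::real_normed_vector \<Rightarrow> 'b::metric_space"
  assumes "continuous_on UNIV g" and "e > 0"
  obtains t where "t > 0"
    "\<And>a b. 0 < a \<Longrightarrow> a < t \<Longrightarrow> 0 < b \<Longrightarrow> b < t \<Longrightarrow> dist (g (p + a *\<^sub>R u + b *\<^sub>R v)) (g p) < e"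
proof -
  obtain d where d: "d > 0" "\<And>x. dist x p < d \<Longrightarrow> dist (g x) (g p) < e"
    using assms unfolding continuous_on_iff by blast
  define t where "t = d / (norm u + norm v + 1)"
  have np: "norm u + norm v + 1 > 0" by (smt (verit) norm_ge_zero)
  have t: "t > 0" using d np by (simp add: t_def)
  have "dist (p + a *\<^sub>R u + b *\<^sub>R v) p < d" if "0 < a" "a < t" "0 < b" "b < t" for a b
  proof -
    have "dist (p + a *\<^sub>R u + b *\<^sub>R v) p \<le> a * norm u + b * norm v"
      using norm_triangle_ineq[of "a *\<^sub>R u" "b *\<^sub>R v"] that by (simp add: dist_norm add.assoc)
    also have "\<dots> \<le> t * (norm u + norm v)"
      using that by (simp add: distrib_left add_mono mult_right_mono)
    also have "\<dots> < t * (norm u + norm v + 1)" using t by simp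
    also have "\<dots> = d" using np by (simp add: t_def)
    finally show ?thesis .
  qed
  with d t that show ?thesis by blast
qed

lemma schwarz_dir_deriv:
  fixes f :: "'a::euclidean_space \<Rightarrow> real"
  assumes df: "\<forall>x. f differentiable at x"
    and dfu: "\<forall>x. dir_deriv f u differentiable at x" and dfv: "\<forall>x. dir_deriv f v differentiable at x"
    and cu: "continuous_on UNIV (dir_deriv (dir_deriv f u) v)"
    and cv: "continuous_on UNIV (dir_deriv (dir_deriv f v) u)"
  shows "dir_deriv (dir_deriv f u) v p = dir_deriv (dir_deriv f v) u p"
proof (rule ccontr)
  let ?A = "dir_deriv (dir_deriv f u) v" and ?B = "dir_deriv (dir_deriv f v) u"
  assume ne: "?A p \<noteq> ?B p"
  define e where "e = \<bar>?A p - ?B p\<bar> / 2"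
  have e: "e > 0" using ne by (simp add: e_def)
  obtain t1 where t1: "t1 > 0"
    "\<And>a b. 0 < a \<Longrightarrow> a < t1 \<Longrightarrow> 0 < b \<Longrightarrow> b < t1 \<Longrightarrow> dist (?A (p + a *\<^sub>R u + b *\<^sub>R v)) (?A p) < e"
    using continuous_on_near_small_shifts[OF cu e] by metis
  obtain t2 where t2: "t2 > 0"
    "\<And>a b. 0 < a \<Longrightarrow> a < t2 \<Longrightarrow> 0 < b \<Longrightarrow> b < t2 \<Longrightarrow> dist (?B (p + a *\<^sub>R v + b *\<^sub>R u)) (?B p) < e"
    using continuous_on_near_small_shifts[OF cv e] by metis
  define t where "t = min t1 t2"
  have t: "t > 0" using t1 t2 by (simp add: t_def)
  obtain s1 r1 where sr1: "0 < s1" "s1 < t" "0 < r1" "r1 < t"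
    "f (p + t *\<^sub>R u + t *\<^sub>R v) - f (p + t *\<^sub>R u) - f (p + t *\<^sub>R v) + f p
       = t * t * ?A (p + s1 *\<^sub>R u + r1 *\<^sub>R v)"
    using second_difference_mean_value[OF df dfu t] by blast
  obtain s2 r2 where sr2: "0 < s2" "s2 < t" "0 < r2" "r2 < t"
    "f (p + t *\<^sub>R v + t *\<^sub>R u) - f (p + t *\<^sub>R v) - f (p + t *\<^sub>R u) + f p
       = t * t * ?B (p + s2 *\<^sub>R v + r2 *\<^sub>R u)"
    using second_difference_mean_value[OF df dfv t] by blast
  have swap: "p + t *\<^sub>R v + t *\<^sub>R u = p + t *\<^sub>R u + t *\<^sub>R v" by (simp add: algebra_simps)
  have "t * t * ?A (p + s1 *\<^sub>R u + r1 *\<^sub>R v) = t * t * ?B (p + s2 *\<^sub>R v + r2 *\<^sub>R u)"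
    using sr1(5) sr2(5) unfolding swap by linarith
  with t have "?A (p + s1 *\<^sub>R u + r1 *\<^sub>R v) = ?B (p + s2 *\<^sub>R v + r2 *\<^sub>R u)"
    by simp
  moreover have "dist (?A (p + s1 *\<^sub>R u + r1 *\<^sub>R v)) (?A p) < e"
    using t1(2) sr1 by (simp add: t_def)
  moreover have "dist (?B (p + s2 *\<^sub>R v + r2 *\<^sub>R u)) (?B p) < e"
    using t2(2) sr2 by (simp add: t_def)
  ultimately have "\<bar>?A p - ?B p\<bar> < 2 * e" by (simp add: dist_real_def)
  thus False by (simp add: e_def)
qed

lemma Ck2_dir_deriv_commute:
  fixes k :: "'a::euclidean_space \<Rightarrow> 'b::euclidean_space"
  assumes k: "Ck 2 k" and i: "i \<in> Basis" and j: "j \<in> Basis"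
  shows "dir_deriv (dir_deriv k i) j p = dir_deriv (dir_deriv k j) i p"
proof (rule euclidean_eqI)
  fix b :: 'b assume b: "b \<in> Basis"
  let ?f = "\<lambda>x. k x \<bullet> b"
  have dk: "\<forall>x. k differentiable at x" using k by (simp add: numeral_2_eq_2)
  have C1: "Ck 1 (dir_deriv k u)" if "u \<in> Basis" for u using k that by (simp add: numeral_2_eq_2)
  hence dku: "\<forall>x. dir_deriv k u differentiable at x" if "u \<in> Basis" for u using that by simp
  have df: "dir_deriv ?f u = (\<lambda>x. dir_deriv k u x \<bullet> b)" for u
    using frechet_derivative_bounded_linear_compose[OF bounded_linear_inner_left] dk
    by (auto simp: fun_eq_iff)
  have ddf: "dir_deriv (dir_deriv ?f u) v = (\<lambda>x. dir_deriv (dir_deriv k u) v x \<bullet> b)"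
    if "u \<in> Basis" for u v
    unfolding df using frechet_derivative_bounded_linear_compose[OF bounded_linear_inner_left] dku[OF that]
    by (auto simp: fun_eq_iff)
  have dfu: "\<forall>x. dir_deriv ?f u differentiable at x" if "u \<in> Basis" for u
    unfolding df using dku[OF that] by (auto intro: differentiable_inner differentiable_const)
  have cont: "continuous_on UNIV (dir_deriv (dir_deriv ?f u) v)" if "u \<in> Basis" "v \<in> Basis" for u v
    unfolding ddf[OF that(1)] using C1[OF that(1)] that(2)
    by (auto intro!: continuous_on_inner continuous_on_const intro: Ck_imp_continuous_on)
  have "\<forall>x. ?f differentiable at x"
    using dk by (auto intro: differentiable_inner differentiable_const)
  from schwarz_dir_deriv[OF this dfu[OF i] dfu[OF j] cont[OF i j] cont[OF j i]]
  show "dir_deriv (dir_deriv k i) j p \<bullet> b = dir_deriv (dir_deriv k j) i p \<bullet> b"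
    using ddf[OF i] ddf[OF j] by (simp add: fun_eq_iff)
qed

section \<open>The action of vector fields\<close>

lemma frechet_derivative_basis_expansion:
  assumes "h differentiable (at x)"
  shows "frechet_derivative h (at x) y = (\<Sum>i\<in>Basis. (y \<bullet> i) *\<^sub>R dir_deriv h i x)"
proof -
  have lin: "linear (frechet_derivative h (at x))" by (rule linear_frechet_derivative[OF assms])
  have "frechet_derivative h (at x) y = frechet_derivative h (at x) (\<Sum>i\<in>Basis. (y \<bullet> i) *\<^sub>R i)"
    by (simp add: euclidean_representation)
  also have "\<dots> = (\<Sum>i\<in>Basis. (y \<bullet> i) *\<^sub>R dir_deriv h i x)"
    by (simp add: linear_sum[OF lin] linear_scale[OF lin] o_def)
  finally show ?thesis .
qed

lemma smooth_vf_differentiable: "smooth_vf h \<Longrightarrow> h differentiable (at x)"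
  using Ck.simps(2)[of 0 h] by (auto simp: smooth_vf_def)

lemma smooth_vf_dir_deriv: "smooth_vf h \<Longrightarrow> i \<in> Basis \<Longrightarrow> smooth_vf (dir_deriv h i)"
  unfolding smooth_vf_def by (metis Ck.simps(2))

lemma vf_act_basis_expansion:
  "smooth_vf h \<Longrightarrow> vf_act g h = (\<lambda>p. \<Sum>i\<in>Basis. (g p \<bullet> i) *\<^sub>R dir_deriv h i p)"
  by (auto simp: vf_act_def fun_eq_iff frechet_derivative_basis_expansion smooth_vf_differentiable)

lemma smooth_vf_act:
  assumes g: "smooth_vf g" and h: "smooth_vf h" shows "smooth_vf (vf_act g h)"
proof -
  have "Ck k (\<lambda>p. (g p \<bullet> i) *\<^sub>R dir_deriv h i p)" if i: "i \<in> Basis" for k i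
  proof (rule Ck_scaleR)
    show "Ck k (\<lambda>p. g p \<bullet> i)"
      using g Ck_bounded_linear_compose[OF bounded_linear_inner_left] by (auto simp: smooth_vf_def)
    show "Ck k (dir_deriv h i)" using smooth_vf_dir_deriv[OF h i] by (simp add: smooth_vf_def)
  qed
  thus ?thesis
    unfolding vf_act_basis_expansion[OF h] smooth_vf_def by (auto intro: Ck_sum)
qed

lemma smooth_vf_id: "smooth_vf id"
  by (simp add: smooth_vf_def id_def Ck_ident)

lemma smooth_vf_scaleR: "smooth_vf f \<Longrightarrow> smooth_vf (\<lambda>x. c *\<^sub>R f x)"
  unfolding smooth_vf_def by (intro allI Ck_scaleR[OF Ck_const]) auto

lemma smooth_vf_sum: "(\<And>i. i \<in> S \<Longrightarrow> smooth_vf (f i)) \<Longrightarrow> smooth_vf (\<lambda>x. \<Sum>i\<in>S. f i x)"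
  unfolding smooth_vf_def by (intro allI Ck_sum) auto

lemma frechet_derivative_vf_act:
  assumes h: "smooth_vf h" and k: "smooth_vf k"
  shows "frechet_derivative (vf_act h k) (at p) y =
     (\<Sum>i\<in>Basis. (h p \<bullet> i) *\<^sub>R frechet_derivative (dir_deriv k i) (at p) y
                + (frechet_derivative h (at p) y \<bullet> i) *\<^sub>R dir_deriv k i p)"
proof -
  have "(vf_act h k has_derivative (\<lambda>y. \<Sum>i\<in>Basis. (h p \<bullet> i) *\<^sub>R frechet_derivative (dir_deriv k i) (at p) y
           + (frechet_derivative h (at p) y \<bullet> i) *\<^sub>R dir_deriv k i p)) (at p)"
    unfolding vf_act_basis_expansion[OF k]
    by (rule has_derivative_sum, rule has_derivative_scaleR,
        rule bounded_linear.has_derivative[OF bounded_linear_inner_left],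
        (rule has_derivative_frechet_derivative smooth_vf_differentiable smooth_vf_dir_deriv h k
          | assumption)+)
  thus ?thesis by (simp add: frechet_derivative_at[symmetric])
qed

lemma vf_act_vf_act_expansion:
  assumes a: "smooth_vf a" and b: "smooth_vf b" and k: "smooth_vf k"
  shows "vf_act a (vf_act b k) p
    = (\<Sum>i\<in>Basis. \<Sum>j\<in>Basis. (b p \<bullet> i * (a p \<bullet> j)) *\<^sub>R dir_deriv (dir_deriv k i) j p)
      + (\<Sum>i\<in>Basis. (vf_act a b p \<bullet> i) *\<^sub>R dir_deriv k i p)"
proof -
  have "vf_act a (vf_act b k) p = (\<Sum>i\<in>Basis. (b p \<bullet> i) *\<^sub>R frechet_derivative (dir_deriv k i) (at p) (a p)
          + (vf_act a b p \<bullet> i) *\<^sub>R dir_deriv k i p)"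
    using frechet_derivative_vf_act[OF b k] by (simp add: vf_act_def)
  also have "\<dots> = (\<Sum>i\<in>Basis. (b p \<bullet> i) *\<^sub>R (\<Sum>j\<in>Basis. (a p \<bullet> j) *\<^sub>R dir_deriv (dir_deriv k i) j p)
          + (vf_act a b p \<bullet> i) *\<^sub>R dir_deriv k i p)"
    using frechet_derivative_basis_expansion[OF smooth_vf_differentiable[OF smooth_vf_dir_deriv[OF k]]]
    by simp
  finally show ?thesis by (simp add: sum.distrib scaleR_sum_right)
qed

lemma vf_act_vf_bracket:
  assumes g: "smooth_vf g" and h: "smooth_vf h" and k: "smooth_vf k"
  shows "vf_act (vf_bracket g h) k p = vf_act g (vf_act h k) p - vf_act h (vf_act g k) p"
proof -
  have sym: "dir_deriv (dir_deriv k i) j p = dir_deriv (dir_deriv k j) i p"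
    if "i \<in> Basis" "j \<in> Basis" for i j
    using Ck2_dir_deriv_commute[of k i j p] k that unfolding smooth_vf_def by blast
  let ?S = "\<lambda>a b. \<Sum>i\<in>Basis. \<Sum>j\<in>Basis. (b p \<bullet> i * (a p \<bullet> j)) *\<^sub>R dir_deriv (dir_deriv k i) j p"
  have "?S g h = (\<Sum>i\<in>Basis. \<Sum>j\<in>Basis. (h p \<bullet> i * (g p \<bullet> j)) *\<^sub>R dir_deriv (dir_deriv k j) i p)"
    using sym by (intro sum.cong refl) simp
  also have "\<dots> = ?S h g"
    by (subst sum.swap) (simp add: mult.commute)
  finally have "?S g h = ?S h g" .
  moreover have "vf_act (vf_bracket g h) k p
      = (\<Sum>i\<in>Basis. (vf_act g h p \<bullet> i) *\<^sub>R dir_deriv k i p)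
        - (\<Sum>i\<in>Basis. (vf_act h g p \<bullet> i) *\<^sub>R dir_deriv k i p)"
    by (simp add: vf_act_basis_expansion[OF k] vf_bracket_def inner_diff_left
        scaleR_left_diff_distrib sum_subtractf)
  ultimately show ?thesis
    unfolding vf_act_vf_act_expansion[OF g h k] vf_act_vf_act_expansion[OF h g k] by simp
qed

lemma vf_act_id: "vf_act g id = g"
  by (simp add: vf_act_def fun_eq_iff)

lemma vf_act_add_left:
  "smooth_vf k \<Longrightarrow> vf_act (\<lambda>p. g1 p + g2 p) k = (\<lambda>p. vf_act g1 k p + vf_act g2 k p)"
  by (simp add: vf_act_def fun_eq_iff linear_add[OF linear_frechet_derivative] smooth_vf_differentiable)

lemma vf_act_scaleR_left:
  "smooth_vf k \<Longrightarrow> vf_act (\<lambda>p. c *\<^sub>R g p) k = (\<lambda>p. c *\<^sub>R vf_act g k p)"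
  by (simp add: vf_act_def fun_eq_iff linear_scale[OF linear_frechet_derivative] smooth_vf_differentiable)

section \<open>Finitely supported functions on words\<close>

definition supp :: "('a list \<Rightarrow> real) \<Rightarrow> 'a list set" where
  "supp x = {w. x w \<noteq> 0}"

definition lincomb :: "('a list \<Rightarrow> real) \<Rightarrow> ('a list \<Rightarrow> 'b::real_vector) \<Rightarrow> 'b" where
  "lincomb x \<Phi> = (\<Sum>w\<in>supp x. x w *\<^sub>R \<Phi> w)"

lemma Tset_iff: "x \<in> Tset \<longleftrightarrow> finite (supp x)"
  by (simp add: Tset_def supp_def)

lemma lincomb_superset:
  "finite S \<Longrightarrow> supp x \<subseteq> S \<Longrightarrow> lincomb x \<Phi> = (\<Sum>w\<in>S. x w *\<^sub>R \<Phi> w)"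
  unfolding lincomb_def by (rule sum.mono_neutral_left) (auto simp: supp_def)

lemma lincomb_cong: "(\<And>w. w \<in> supp x \<Longrightarrow> \<Phi> w = \<Psi> w) \<Longrightarrow> lincomb x \<Phi> = lincomb x \<Psi>"
  by (simp add: lincomb_def)

lemma lincomb_swap: "lincomb x (\<lambda>v. lincomb y (\<lambda>u. \<Phi> v u)) = lincomb y (\<lambda>u. lincomb x (\<lambda>v. \<Phi> v u))"
  by (simp add: lincomb_def scaleR_sum_right sum.swap[of _ "supp x"] mult.commute)

lemma word_in_Tset: "word v \<in> Tset"
  by (simp add: Tset_def word_def)

lemma lincomb_word: "lincomb (word v) \<Phi> = \<Phi> v"
  by (simp add: lincomb_def supp_def word_def)

lemma lincomb_of_words: "x \<in> Tset \<Longrightarrow> lincomb x (\<lambda>v. word v w) = x w"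
  by (simp add: lincomb_def word_def Tset_iff sum.delta' if_distrib[of "\<lambda>t. _ * t"] cong: if_cong)
     (simp add: supp_def)

lemma tadd_in_Tset: "x \<in> Tset \<Longrightarrow> y \<in> Tset \<Longrightarrow> tadd x y \<in> Tset"
  unfolding Tset_iff by (rule finite_subset[of _ "supp x \<union> supp y"]) (auto simp: supp_def tadd_def)

lemma tscale_in_Tset: "x \<in> Tset \<Longrightarrow> tscale c x \<in> Tset"
  unfolding Tset_iff by (rule finite_subset[of _ "supp x"]) (auto simp: supp_def tscale_def)

lemma diff_in_Tset: "x \<in> Tset \<Longrightarrow> y \<in> Tset \<Longrightarrow> (\<lambda>w. x w - y w) \<in> Tset"
  unfolding Tset_iff by (rule finite_subset[of _ "supp x \<union> supp y"]) (auto simp: supp_def)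

lemma lincomb_tadd:
  "x \<in> Tset \<Longrightarrow> y \<in> Tset \<Longrightarrow> lincomb (tadd x y) \<Phi> = lincomb x \<Phi> + lincomb y \<Phi>"
  unfolding Tset_iff
  by (subst (1 2 3) lincomb_superset[of "supp x \<union> supp y"])
     (auto simp: supp_def tadd_def scaleR_add_left sum.distrib)

lemma lincomb_tscale: "x \<in> Tset \<Longrightarrow> lincomb (tscale c x) \<Phi> = c *\<^sub>R lincomb x \<Phi>"
  unfolding Tset_iff
  by (subst (1 2) lincomb_superset[of "supp x"]) (auto simp: supp_def tscale_def scaleR_sum_right)

lemma lincomb_diff:
  "x \<in> Tset \<Longrightarrow> y \<in> Tset \<Longrightarrow> lincomb (\<lambda>w. x w - y w) \<Phi> = lincomb x \<Phi> - lincomb y \<Phi>"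
  unfolding Tset_iff
  by (subst (1 2 3) lincomb_superset[of "supp x \<union> supp y"])
     (auto simp: supp_def scaleR_diff_left sum_subtractf)

lemma supp_lincomb: "supp (\<lambda>w. lincomb x (\<lambda>v. G v w)) \<subseteq> (\<Union>v\<in>supp x. supp (G v))"
  unfolding supp_def lincomb_def by (force intro: sum.neutral)

lemma lincomb_in_Tset:
  "x \<in> Tset \<Longrightarrow> (\<And>v. G v \<in> Tset) \<Longrightarrow> (\<lambda>w. lincomb x (\<lambda>v. G v w)) \<in> Tset"
  unfolding Tset_iff by (rule finite_subset[OF supp_lincomb]) blast

lemma lincomb_lincomb:
  assumes x: "x \<in> Tset" and G: "\<And>v. G v \<in> Tset"
  shows "lincomb (\<lambda>w. lincomb x (\<lambda>v. G v w)) \<Phi> = lincomb x (\<lambda>v. lincomb (G v) \<Phi>)"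
proof -
  let ?U = "\<Union>v\<in>supp x. supp (G v)"
  have U: "finite ?U" using x G by (simp add: Tset_iff)
  have "lincomb (\<lambda>w. lincomb x (\<lambda>v. G v w)) \<Phi> = (\<Sum>w\<in>?U. lincomb x (\<lambda>v. G v w) *\<^sub>R \<Phi> w)"
    by (rule lincomb_superset[OF U supp_lincomb])
  also have "\<dots> = lincomb x (\<lambda>v. \<Sum>w\<in>?U. G v w *\<^sub>R \<Phi> w)"
    by (simp add: lincomb_def scaleR_sum_left sum.swap[of _ ?U] scaleR_sum_right)
  also have "\<dots> = lincomb x (\<lambda>v. lincomb (G v) \<Phi>)"
    by (rule lincomb_cong, rule lincomb_superset[symmetric]) (use U in auto)
  finally show ?thesis .
qed

lemma conc_eq_sum_splittings:
  assumes "x \<in> Tset" "y \<in> Tset"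
  shows "conc x y w = (\<Sum>p\<in>{p\<in>supp x \<times> supp y. fst p @ snd p = w}. x (fst p) * y (snd p))"
proof -
  have inj: "inj_on (\<lambda>i. (take i w, drop i w)) {..length w}"
    by (rule inj_onI) (metis atMost_iff length_take min.absorb2 prod.inject)
  have split: "(\<lambda>i. (take i w, drop i w)) ` {..length w} = {p. fst p @ snd p = w}"
  proof (intro set_eqI iffI)
    fix p :: "'a list \<times> 'a list" assume "p \<in> {p. fst p @ snd p = w}"
    thus "p \<in> (\<lambda>i. (take i w, drop i w)) ` {..length w}"
      by (cases p) (auto intro!: image_eqI[of _ _ "length (fst p)"])
  qed auto
  have "conc x y w = (\<Sum>p\<in>{p. fst p @ snd p = w}. x (fst p) * y (snd p))"
    unfolding conc_def split[symmetric] by (simp add: sum.reindex[OF inj])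
  also have "\<dots> = (\<Sum>p\<in>{p\<in>supp x \<times> supp y. fst p @ snd p = w}. x (fst p) * y (snd p))"
    using finite_imageI[of "{..length w}" "\<lambda>i. (take i w, drop i w)"] unfolding split
    by (intro sum.mono_neutral_right) (auto simp: supp_def)
  finally show ?thesis .
qed

lemma supp_conc:
  assumes "x \<in> Tset" "y \<in> Tset"
  shows "supp (conc x y) \<subseteq> (\<lambda>p. fst p @ snd p) ` (supp x \<times> supp y)"
proof
  fix w assume "w \<in> supp (conc x y)"
  hence "(\<Sum>p\<in>{p\<in>supp x \<times> supp y. fst p @ snd p = w}. x (fst p) * y (snd p)) \<noteq> 0"
    using conc_eq_sum_splittings[OF assms] by (simp add: supp_def)
  hence "{p\<in>supp x \<times> supp y. fst p @ snd p = w} \<noteq> {}" by (metis sum.empty)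
  thus "w \<in> (\<lambda>p. fst p @ snd p) ` (supp x \<times> supp y)" by force
qed

lemma conc_in_Tset: "x \<in> Tset \<Longrightarrow> y \<in> Tset \<Longrightarrow> conc x y \<in> Tset"
  unfolding Tset_iff by (rule finite_subset[OF supp_conc]) (auto simp: Tset_iff)

lemma commutator_in_Tset: "x \<in> Tset \<Longrightarrow> y \<in> Tset \<Longrightarrow> commutator x y \<in> Tset"
  unfolding commutator_def by (intro diff_in_Tset conc_in_Tset)

lemma LieA_subset_Tset: "LieA \<subseteq> Tset"
proof
  fix x :: "'a list \<Rightarrow> real" assume "x \<in> LieA"
  thus "x \<in> Tset"
    by induction (simp_all add: word_in_Tset tadd_in_Tset tscale_in_Tset commutator_in_Tset)
qed

lemma lincomb_conc:
  assumes x: "x \<in> Tset" and y: "y \<in> Tset"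
  shows "lincomb (conc x y) \<Phi> = lincomb x (\<lambda>v. lincomb y (\<lambda>u. \<Phi> (v @ u)))"
proof -
  let ?S = "supp x \<times> supp y" and ?cat = "\<lambda>p::'a list \<times> 'a list. fst p @ snd p"
  let ?h = "\<lambda>p. (x (fst p) * y (snd p)) *\<^sub>R \<Phi> (fst p @ snd p)"
  have S: "finite ?S" using x y by (simp add: Tset_iff)
  have "lincomb (conc x y) \<Phi> = (\<Sum>w\<in>?cat ` ?S. conc x y w *\<^sub>R \<Phi> w)"
    by (rule lincomb_superset[OF finite_imageI[OF S] supp_conc[OF x y]])
  also have "\<dots> = (\<Sum>w\<in>?cat ` ?S. \<Sum>p\<in>{p\<in>?S. ?cat p = w}. ?h p)"
    by (intro sum.cong refl) (auto simp: conc_eq_sum_splittings[OF x y] scaleR_sum_left)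
  also have "\<dots> = (\<Sum>p\<in>?S. ?h p)"
    by (rule sum.group[OF S finite_imageI[OF S]]) simp
  also have "\<dots> = lincomb x (\<lambda>v. lincomb y (\<lambda>u. \<Phi> (v @ u)))"
    unfolding lincomb_def sum.cartesian_product' by (simp add: scaleR_sum_right)
  finally show ?thesis .
qed

lemma conc_eq_lincomb:
  "x \<in> Tset \<Longrightarrow> y \<in> Tset \<Longrightarrow> conc x y w = lincomb x (\<lambda>v. lincomb y (\<lambda>u. word (v @ u) w))"
  using lincomb_conc[of x y "\<lambda>v. word v w"] lincomb_of_words[OF conc_in_Tset] by metis

lemma conc_assoc:
  assumes "x \<in> Tset" "y \<in> Tset" "z \<in> Tset"
  shows "conc (conc x y) z = conc x (conc y z)"
proof
  fix w
  have "conc (conc x y) z w = lincomb x (\<lambda>v. lincomb y (\<lambda>u. lincomb z (\<lambda>t. word ((v @ u) @ t) w)))"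
    using assms by (simp add: conc_eq_lincomb conc_in_Tset lincomb_conc)
  also have "\<dots> = conc x (conc y z) w"
    using assms by (simp add: conc_eq_lincomb[of x "conc y z"] conc_in_Tset lincomb_conc)
  finally show "conc (conc x y) z w = conc x (conc y z) w" .
qed

lemma conc_Nil_left: "x \<in> Tset \<Longrightarrow> conc (word []) x = x"
  by (simp add: fun_eq_iff conc_eq_lincomb word_in_Tset lincomb_word lincomb_of_words)

lemma conc_Nil_right: "x \<in> Tset \<Longrightarrow> conc x (word []) = x"
  by (simp add: fun_eq_iff conc_eq_lincomb word_in_Tset lincomb_word lincomb_of_words)

lemma conc_word_word: "conc (word v) (word u) = word (v @ u)"
  by (simp add: fun_eq_iff conc_eq_lincomb word_in_Tset lincomb_word)

lemma mult_ext_word_Nil [simp]: "mult_ext_word L [] = word []"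
  by (simp add: mult_ext_word_def)

lemma mult_ext_word_Cons [simp]: "mult_ext_word L (a # v) = conc (L a) (mult_ext_word L v)"
  by (simp add: mult_ext_word_def)

lemma mult_ext_word_in_Tset: "(\<And>a. L a \<in> Tset) \<Longrightarrow> mult_ext_word L v \<in> Tset"
  by (induction v) (auto simp: word_in_Tset conc_in_Tset)

lemma mult_ext_word_append:
  "(\<And>a. L a \<in> Tset) \<Longrightarrow> mult_ext_word L (v @ u) = conc (mult_ext_word L v) (mult_ext_word L u)"
  by (induction v) (auto simp: conc_Nil_left mult_ext_word_in_Tset conc_assoc)

lemma mult_ext_word_letters: "mult_ext_word (\<lambda>a. word [a]) v = word v"
  by (induction v) (auto simp: conc_word_word)

lemma mult_ext_eq_lincomb: "mult_ext L x = (\<lambda>w. lincomb x (\<lambda>v. mult_ext_word L v w))"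
  by (simp add: mult_ext_def lincomb_def supp_def)

lemma mult_ext_in_Tset: "x \<in> Tset \<Longrightarrow> (\<And>a. L a \<in> Tset) \<Longrightarrow> mult_ext L x \<in> Tset"
  unfolding mult_ext_eq_lincomb by (intro lincomb_in_Tset mult_ext_word_in_Tset)

lemma lincomb_mult_ext:
  "x \<in> Tset \<Longrightarrow> (\<And>a. L a \<in> Tset)
    \<Longrightarrow> lincomb (mult_ext L x) \<Phi> = lincomb x (\<lambda>v. lincomb (mult_ext_word L v) \<Phi>)"
  unfolding mult_ext_eq_lincomb by (intro lincomb_lincomb mult_ext_word_in_Tset)

lemma mult_ext_of_word: "mult_ext L (word v) = mult_ext_word L v"
  by (simp add: mult_ext_eq_lincomb lincomb_word)

lemma mult_ext_letters: "x \<in> Tset \<Longrightarrow> mult_ext (\<lambda>a. word [a]) x = x"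
  by (simp add: mult_ext_eq_lincomb mult_ext_word_letters lincomb_of_words)

lemma mult_ext_tadd:
  "x \<in> Tset \<Longrightarrow> y \<in> Tset \<Longrightarrow> mult_ext L (tadd x y) = tadd (mult_ext L x) (mult_ext L y)"
  by (simp add: mult_ext_eq_lincomb lincomb_tadd, simp add: tadd_def)

lemma mult_ext_tscale: "x \<in> Tset \<Longrightarrow> mult_ext L (tscale c x) = tscale c (mult_ext L x)"
  by (simp add: mult_ext_eq_lincomb lincomb_tscale, simp add: tscale_def)

lemma mult_ext_diff:
  "x \<in> Tset \<Longrightarrow> y \<in> Tset \<Longrightarrow> mult_ext L (\<lambda>w. x w - y w) = (\<lambda>w. mult_ext L x w - mult_ext L y w)"
  by (simp add: mult_ext_eq_lincomb lincomb_diff)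

lemma mult_ext_conc:
  assumes x: "x \<in> Tset" and y: "y \<in> Tset" and L: "\<And>a. L a \<in> Tset"
  shows "mult_ext L (conc x y) = conc (mult_ext L x) (mult_ext L y)"
proof
  fix w
  have M: "mult_ext_word L v \<in> Tset" for v by (rule mult_ext_word_in_Tset[OF L])
  have "mult_ext L (conc x y) w
      = lincomb x (\<lambda>v. lincomb y (\<lambda>u. conc (mult_ext_word L v) (mult_ext_word L u) w))"
    by (simp add: mult_ext_eq_lincomb lincomb_conc x y mult_ext_word_append L)
  also have "\<dots> = lincomb x (\<lambda>v. lincomb (mult_ext_word L v) (\<lambda>v'.
       lincomb y (\<lambda>u. lincomb (mult_ext_word L u) (\<lambda>u'. word (v' @ u') w))))"
    by (simp add: conc_eq_lincomb M lincomb_swap[of "mult_ext_word L _" y])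
  also have "\<dots> = conc (mult_ext L x) (mult_ext L y) w"
    by (simp add: conc_eq_lincomb mult_ext_in_Tset x y L lincomb_mult_ext)
  finally show "mult_ext L (conc x y) w = conc (mult_ext L x) (mult_ext L y) w" .
qed

lemma mult_ext_commutator:
  "x \<in> Tset \<Longrightarrow> y \<in> Tset \<Longrightarrow> (\<And>a. L a \<in> Tset)
    \<Longrightarrow> mult_ext L (commutator x y) = commutator (mult_ext L x) (mult_ext L y)"
  unfolding commutator_def by (simp add: mult_ext_diff conc_in_Tset mult_ext_conc)

lemma mult_ext_mult_ext_word:
  "(\<And>a. L a \<in> Tset) \<Longrightarrow> (\<And>a. M a \<in> Tset)
    \<Longrightarrow> mult_ext L (mult_ext_word M v) = mult_ext_word (\<lambda>a. mult_ext L (M a)) v"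
  by (induction v) (simp_all add: mult_ext_of_word mult_ext_conc mult_ext_word_in_Tset)

lemma mult_ext_mult_ext:
  assumes x: "x \<in> Tset" and L: "\<And>a. L a \<in> Tset" and M: "\<And>a. M a \<in> Tset"
  shows "mult_ext L (mult_ext M x) = mult_ext (\<lambda>a. mult_ext L (M a)) x"
proof
  fix w
  have "mult_ext L (mult_ext M x) w
      = lincomb x (\<lambda>v. lincomb (mult_ext_word M v) (\<lambda>v'. mult_ext_word L v' w))"
    using lincomb_mult_ext[OF x M, where \<Phi> = "\<lambda>v'. mult_ext_word L v' w"]
    by (simp add: mult_ext_eq_lincomb)
  also have "\<dots> = lincomb x (\<lambda>v. mult_ext L (mult_ext_word M v) w)"
    by (simp add: mult_ext_eq_lincomb)
  also have "\<dots> = mult_ext (\<lambda>a. mult_ext L (M a)) x w"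
    unfolding mult_ext_mult_ext_word[OF L M] mult_ext_eq_lincomb[of "\<lambda>a. mult_ext L (M a)"] ..
  finally show "mult_ext L (mult_ext M x) w = mult_ext (\<lambda>a. mult_ext L (M a)) x w" .
qed

section \<open>Hoffman maps of power series\<close>

definition obracket :: "('a \<Rightarrow> 'a \<Rightarrow> 'a option) \<Rightarrow> 'a option \<Rightarrow> 'a option \<Rightarrow> 'a option" where
  "obracket br x y = (case (x, y) of (Some b, Some c) \<Rightarrow> br b c | _ \<Rightarrow> None)"

lemma obracket_simps [simp]:
  "obracket br None y = None" "obracket br x None = None" "obracket br (Some b) (Some c) = br b c"
  by (auto simp: obracket_def split: option.splits)

lemma obracket_assoc:
  assumes "bracket_assoc br"
  shows "obracket br x (obracket br y z) = obracket br (obracket br x y) z"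
proof (cases x; cases y; cases z)
  fix a b c assume "x = Some a" "y = Some b" "z = Some c"
  moreover have "(case br a b of None \<Rightarrow> None | Some d \<Rightarrow> br d c)
      = (case br b c of None \<Rightarrow> None | Some d \<Rightarrow> br a d)"
    using assms unfolding bracket_assoc_def by blast
  ultimately show ?thesis by (auto simp: obracket_def split: option.splits)
qed auto

lemma ibr_Cons: "v \<noteq> [] \<Longrightarrow> ibr br (a # v) = obracket br (Some a) (ibr br v)"
  by (cases v) (auto simp: obracket_def)

lemma ibr_append:
  assumes "bracket_assoc br" and "v \<noteq> []" and "u \<noteq> []"
  shows "ibr br (v @ u) = obracket br (ibr br v) (ibr br u)"
  using assms(2)
proof (induction v rule: list_nonempty_induct)
  case (single a) thus ?case using assms(3) by (simp add: ibr_Cons)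
next
  case (cons a v)
  thus ?case using assms(1,3) by (simp add: ibr_Cons obracket_assoc)
qed

lemma ibr_weight:
  assumes "weight_ok br \<omega>"
  shows "ibr br w = Some a \<Longrightarrow> sum_list (map \<omega> w) = \<omega> a"
proof (induction w arbitrary: a)
  case Nil thus ?case by simp
next
  case (Cons b v)
  show ?case
  proof (cases "v = []")
    case True thus ?thesis using Cons by simp
  next
    case False
    then obtain c where c: "ibr br v = Some c" "br b c = Some a"
      using Cons.prems by (cases "ibr br v") (auto simp: ibr_Cons)
    thus ?thesis using Cons.IH[OF c(1)] assms unfolding weight_ok_def by simp
  qed
qed

lemma finite_weight_le:
  assumes "weight_ok br \<omega>" shows "finite {b. \<omega> b \<le> n}"
proof -
  have "{b. \<omega> b \<le> n} = (\<Union>k\<le>n. {b. \<omega> b = k})" by auto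
  with assms show ?thesis unfolding weight_ok_def by simp
qed

definition ibr_fibre :: "('a \<Rightarrow> 'a \<Rightarrow> 'a option) \<Rightarrow> nat \<Rightarrow> 'a \<Rightarrow> 'a list set" where
  "ibr_fibre br n a = {w. length w = n \<and> ibr br w = Some a}"

lemma length_le_weight_if_ibr:
  assumes "weight_ok br \<omega>" and "ibr br w = Some a"
  shows "1 \<le> length w" "length w \<le> \<omega> a" "set w \<subseteq> {b. \<omega> b \<le> \<omega> a}"
proof -
  have s: "sum_list (map \<omega> w) = \<omega> a" by (rule ibr_weight[OF assms])
  have "\<forall>b\<in>set w. 1 \<le> \<omega> b" using assms(1) by (simp add: weight_ok_def)
  hence "length w \<le> sum_list (map \<omega> w)"
    by (induction w) auto
  thus "length w \<le> \<omega> a" using s by simp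
  show "set w \<subseteq> {b. \<omega> b \<le> \<omega> a}"
    using member_le_sum_list[of _ "map \<omega> w"] s by auto
  show "1 \<le> length w" using assms(2) by (cases w) auto
qed

lemma finite_ibr_words: "weight_ok br \<omega> \<Longrightarrow> finite {w. ibr br w = Some a}"
  by (rule finite_subset[OF _ finite_lists_length_le[OF finite_weight_le, of br \<omega> "\<omega> a" "\<omega> a"]])
     (auto dest: length_le_weight_if_ibr)

lemma finite_ibr_fibre: "weight_ok br \<omega> \<Longrightarrow> finite (ibr_fibre br n a)"
  by (rule finite_subset[OF _ finite_ibr_words]) (auto simp: ibr_fibre_def)

lemma ibr_fibre_Suc_0: "ibr_fibre br (Suc 0) a = {[a]}"
  by (auto simp: ibr_fibre_def length_Suc_conv)

lemma ibr_fibre_Suc_Suc: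
  "ibr_fibre br (Suc (Suc k)) a = (\<Union>(b, c)\<in>{(b, c). br b c = Some a}. (#) b ` ibr_fibre br (Suc k) c)"
proof (intro set_eqI iffI)
  fix w assume "w \<in> ibr_fibre br (Suc (Suc k)) a"
  hence len: "length w = Suc (Suc k)" and ibr_w: "ibr br w = Some a" by (simp_all add: ibr_fibre_def)
  then obtain b v where w: "w = b # v" by (cases w) auto
  with len have v: "length v = Suc k" "v \<noteq> []" by auto
  obtain c where c: "ibr br v = Some c" "br b c = Some a"
    using ibr_w v(2) unfolding w by (cases "ibr br v") (simp_all add: ibr_Cons)
  show "w \<in> (\<Union>(b, c)\<in>{(b, c). br b c = Some a}. (#) b ` ibr_fibre br (Suc k) c)"
    unfolding w by (rule UN_I[of "(b, c)"]) (simp_all add: c v ibr_fibre_def)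
next
  fix w assume "w \<in> (\<Union>(b, c)\<in>{(b, c). br b c = Some a}. (#) b ` ibr_fibre br (Suc k) c)"
  then obtain b c v where "br b c = Some a" "w = b # v" "length v = Suc k" "ibr br v = Some c"
    by (auto simp: ibr_fibre_def)
  moreover from this have "v \<noteq> []" by auto
  ultimately show "w \<in> ibr_fibre br (Suc (Suc k)) a" by (simp add: ibr_fibre_def ibr_Cons)
qed

lemma finite_bracket_pairs: "weight_ok br \<omega> \<Longrightarrow> finite {(b, c). br b c = Some a}"
  by (rule finite_subset[of _ "{b. \<omega> b \<le> \<omega> a} \<times> {c. \<omega> c \<le> \<omega> a}"])
     (auto simp: weight_ok_def finite_weight_le)

lemma sum_ibr_fibre_Suc_Suc:
  assumes "weight_ok br \<omega>"
  shows "(\<Sum>w\<in>ibr_fibre br (Suc (Suc k)) a. G (hd w) (tl w))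
       = (\<Sum>(b, c)\<in>{(b, c). br b c = Some a}. \<Sum>v\<in>ibr_fibre br (Suc k) c. G b v)"
proof -
  have "(\<Sum>w\<in>ibr_fibre br (Suc (Suc k)) a. G (hd w) (tl w))
      = (\<Sum>p\<in>{(b, c). br b c = Some a}.
           \<Sum>w\<in>(\<lambda>(b, c). (#) b ` ibr_fibre br (Suc k) c) p. G (hd w) (tl w))"
    unfolding ibr_fibre_Suc_Suc
    by (rule sum.UNION_disjoint[OF finite_bracket_pairs[OF assms]])
       (auto simp: finite_ibr_fibre[OF assms], auto simp: ibr_fibre_def)
  also have "\<dots> = (\<Sum>(b, c)\<in>{(b, c). br b c = Some a}. \<Sum>v\<in>ibr_fibre br (Suc k) c. G b v)"
    by (intro sum.cong refl) (auto simp: sum.reindex)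
  finally show ?thesis .
qed

lemma fps_power_nth_below:
  fixes f :: "'a::idom fps"
  assumes "fps_nth f 0 = 0" and "m < n"
  shows "fps_nth (f ^ n) m = 0"
proof (cases "f = 0")
  case True thus ?thesis using assms(2) by (simp add: zero_power)
next
  case False
  with assms(1) have "subdegree f \<noteq> 0" by (simp add: subdegree_eq_0_iff)
  hence "n \<le> n * subdegree f" by simp
  with assms(2) show ?thesis by (intro fps_pow_nth_below_subdegree) linarith
qed

lemma fps_compose_nth_as_sum:
  fixes f g :: "'a::idom fps"
  assumes "fps_nth f 0 = 0" and "1 \<le> m" and "m \<le> N"
  shows "(\<Sum>n=1..N. fps_nth g n * fps_nth (f ^ n) m) = fps_nth (g oo f) m"
proof -
  have "(\<Sum>n=1..N. fps_nth g n * fps_nth (f ^ n) m) = (\<Sum>n=0..N. fps_nth g n * fps_nth (f ^ n) m)"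
    using assms(2) by (intro sum.mono_neutral_left) (auto simp: Suc_le_eq)
  also have "\<dots> = (\<Sum>n=0..m. fps_nth g n * fps_nth (f ^ n) m)"
    using assms by (intro sum.mono_neutral_right) (auto simp: fps_power_nth_below)
  finally show ?thesis by (simp add: fps_compose_nth)
qed

definition hoffman_letter :: "('a \<Rightarrow> 'a \<Rightarrow> 'a option) \<Rightarrow> real fps \<Rightarrow> 'a \<Rightarrow> ('a list \<Rightarrow> real)" where
  "hoffman_letter br f a = (\<lambda>w. if ibr br w = Some a then fps_nth f (length w) else 0)"

lemma hoffman_letter_in_Tset: "weight_ok br \<omega> \<Longrightarrow> hoffman_letter br f a \<in> Tset"
  unfolding Tset_iff
  by (rule finite_subset[OF _ finite_ibr_words]) (auto simp: supp_def hoffman_letter_def split: if_splits)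

lemma phiL_eq_hoffman_letter: "phiL br = hoffman_letter br (fps_exp 1 - 1)"
proof -
  have "ibr br w = Some a \<Longrightarrow> length w \<noteq> 0" for w a by auto
  thus ?thesis by (auto simp: fun_eq_iff phiL_def hoffman_letter_def)
qed

lemma psiL_eq_hoffman_letter: "psiL br = hoffman_letter br (fps_ln 1)"
  by (auto simp: fun_eq_iff psiL_def hoffman_letter_def fps_ln_nth)

lemma hoffman_letter_fps_X: "hoffman_letter br fps_X a = word [a]"
  by (auto simp: fun_eq_iff hoffman_letter_def word_def length_Suc_conv)

lemma sum_bracket_pairs_delta:
  assumes "finite {(b, c). br b c = Some a}"
  shows "(\<Sum>(b, c)\<in>{(b, c). br b c = Some a}. if x = Some b \<and> y = Some c then r else 0)
       = (if obracket br x y = Some a then r else 0)"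
proof (cases "x = None \<or> y = None")
  case False
  then obtain b0 c0 where "x = Some b0" "y = Some c0" by auto
  thus ?thesis using sum.delta'[OF assms, of "(b0, c0)" "\<lambda>_. r"]
    by (simp add: case_prod_unfold prod_eq_iff conj_commute)
qed auto

lemma obracket_ibr_split:
  fixes f g :: "real fps"
  assumes "bracket_assoc br" and "fps_nth f 0 = 0" and "fps_nth g 0 = 0"
  shows "(if obracket br (ibr br t) (ibr br d) = Some a then fps_nth f (length t) * fps_nth g (length d) else 0)
       = (if ibr br (t @ d) = Some a then fps_nth f (length t) * fps_nth g (length d) else 0)"
  using assms by (cases "t = []"; cases "d = []") (simp_all add: ibr_append)

lemma sum_ibr_fibre_split_step:
  fixes f :: "real fps"
  assumes assoc: "bracket_assoc br" and wok: "weight_ok br \<omega>" and f0: "fps_nth f 0 = 0"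
    and IH: "\<And>c. (\<Sum>v\<in>ibr_fibre br (Suc k) c. mult_ext_word (hoffman_letter br f) v d)
                 = (if ibr br d = Some c then fps_nth (f ^ Suc k) (length d) else 0)"
  shows "(\<Sum>w\<in>ibr_fibre br (Suc (Suc k)) a.
            hoffman_letter br f (hd w) t * mult_ext_word (hoffman_letter br f) (tl w) d)
       = (if ibr br (t @ d) = Some a then fps_nth f (length t) * fps_nth (f ^ Suc k) (length d) else 0)"
proof -
  let ?r = "fps_nth f (length t) * fps_nth (f ^ Suc k) (length d)"
  have "(\<Sum>w\<in>ibr_fibre br (Suc (Suc k)) a.
            hoffman_letter br f (hd w) t * mult_ext_word (hoffman_letter br f) (tl w) d)
      = (\<Sum>(b, c)\<in>{(b, c). br b c = Some a}.
            hoffman_letter br f b t * (\<Sum>v\<in>ibr_fibre br (Suc k) c. mult_ext_word (hoffman_letter br f) v d))"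
    unfolding sum_ibr_fibre_Suc_Suc[OF wok, where G = "\<lambda>b v. hoffman_letter br f b t
                                          * mult_ext_word (hoffman_letter br f) v d"]
    by (simp add: sum_distrib_left case_prod_unfold)
  also have "\<dots> = (\<Sum>(b, c)\<in>{(b, c). br b c = Some a}. if ibr br t = Some b \<and> ibr br d = Some c then ?r else 0)"
    by (intro sum.cong refl) (auto simp: IH hoffman_letter_def)
  also have "\<dots> = (if obracket br (ibr br t) (ibr br d) = Some a then ?r else 0)"
    by (rule sum_bracket_pairs_delta[OF finite_bracket_pairs[OF wok]])
  also have "\<dots> = (if ibr br (t @ d) = Some a then ?r else 0)"
    using f0 by (intro obracket_ibr_split[OF assoc]) (simp_all add: fps_power_zeroth)
  finally show ?thesis .
qed

lemma sum_ibr_fibre_mult_ext_word: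
  fixes f :: "real fps"
  assumes assoc: "bracket_assoc br" and wok: "weight_ok br \<omega>" and f0: "fps_nth f 0 = 0"
  shows "(\<Sum>w\<in>ibr_fibre br (Suc k) a. mult_ext_word (hoffman_letter br f) w u)
       = (if ibr br u = Some a then fps_nth (f ^ Suc k) (length u) else 0)"
proof (induction k arbitrary: a u)
  case 0
  show ?case
    by (simp add: ibr_fibre_Suc_0 conc_Nil_right hoffman_letter_in_Tset[OF wok])
       (simp add: hoffman_letter_def)
next
  case (Suc k)
  let ?L = "hoffman_letter br f"
  have "mult_ext_word ?L w u
      = (\<Sum>i\<le>length u. ?L (hd w) (take i u) * mult_ext_word ?L (tl w) (drop i u))"
    if "ibr br w = Some a" for w
    using that by (cases w) (simp_all add: conc_def)
  hence "(\<Sum>w\<in>ibr_fibre br (Suc (Suc k)) a. mult_ext_word ?L w u)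
      = (\<Sum>w\<in>ibr_fibre br (Suc (Suc k)) a. \<Sum>i\<le>length u.
            ?L (hd w) (take i u) * mult_ext_word ?L (tl w) (drop i u))"
    by (intro sum.cong refl) (auto simp: ibr_fibre_def)
  also have "\<dots> = (\<Sum>i\<le>length u. \<Sum>w\<in>ibr_fibre br (Suc (Suc k)) a.
            ?L (hd w) (take i u) * mult_ext_word ?L (tl w) (drop i u))"
    by (rule sum.swap)
  also have "\<dots> = (\<Sum>i\<le>length u. if ibr br u = Some a
            then fps_nth f i * fps_nth (f ^ Suc k) (length u - i) else 0)"
    by (intro sum.cong refl) (simp add: sum_ibr_fibre_split_step[OF assoc wok f0 Suc.IH])
  also have "\<dots> = (if ibr br u = Some a then fps_nth (f ^ Suc (Suc k)) (length u) else 0)"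
    by (simp add: fps_mult_nth atLeast0AtMost)
  finally show ?case .
qed

lemma mult_ext_hoffman_letter:
  fixes f g :: "real fps"
  assumes assoc: "bracket_assoc br" and wok: "weight_ok br \<omega>" and f0: "fps_nth f 0 = 0"
  shows "mult_ext (hoffman_letter br f) (hoffman_letter br g a) = hoffman_letter br (g oo f) a"
proof
  fix u
  let ?M = "\<lambda>w. mult_ext_word (hoffman_letter br f) w u"
  have "mult_ext (hoffman_letter br f) (hoffman_letter br g a) u
      = (\<Sum>w\<in>{w. ibr br w = Some a}. fps_nth g (length w) * ?M w)"
    unfolding mult_ext_eq_lincomb
    by (subst lincomb_superset[OF finite_ibr_words[OF wok]])
       (auto simp: supp_def hoffman_letter_def intro!: sum.cong)
  also have "{w. ibr br w = Some a} = (\<Union>n\<in>{1..\<omega> a}. ibr_fibre br n a)"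
    using length_le_weight_if_ibr[OF wok] by (auto simp: ibr_fibre_def)
  also have "(\<Sum>w\<in>(\<Union>n\<in>{1..\<omega> a}. ibr_fibre br n a). fps_nth g (length w) * ?M w)
      = (\<Sum>n=1..\<omega> a. \<Sum>w\<in>ibr_fibre br n a. fps_nth g (length w) * ?M w)"
    by (rule sum.UNION_disjoint) (auto simp: finite_ibr_fibre[OF wok], auto simp: ibr_fibre_def)
  also have "\<dots> = (\<Sum>n=1..\<omega> a. fps_nth g n * (\<Sum>w\<in>ibr_fibre br n a. ?M w))"
    by (simp add: sum_distrib_left ibr_fibre_def)
  also have "\<dots> = (\<Sum>n=1..\<omega> a. fps_nth g n * (if ibr br u = Some a then fps_nth (f ^ n) (length u) else 0))"
  proof (intro sum.cong refl)
    fix n :: nat assume "n \<in> {1..\<omega> a}"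
    then obtain k where "n = Suc k" by (cases n) auto
    thus "fps_nth g n * (\<Sum>w\<in>ibr_fibre br n a. ?M w)
        = fps_nth g n * (if ibr br u = Some a then fps_nth (f ^ n) (length u) else 0)"
      by (simp add: sum_ibr_fibre_mult_ext_word[OF assoc wok f0])
  qed
  also have "\<dots> = hoffman_letter br (g oo f) a u"
  proof (cases "ibr br u = Some a")
    case True
    with length_le_weight_if_ibr[OF wok] have "1 \<le> length u" "length u \<le> \<omega> a" by auto
    thus ?thesis using True by (simp add: hoffman_letter_def fps_compose_nth_as_sum[OF f0, symmetric])
  qed (simp add: hoffman_letter_def)
  finally show "mult_ext (hoffman_letter br f) (hoffman_letter br g a) u
      = hoffman_letter br (g oo f) a u" .
qed

lemma PhiH_PsiH:
  assumes "bracket_assoc br" and "weight_ok br \<omega>" and "x \<in> Tset"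
  shows "PhiH br (PsiH br x) = x"
proof -
  have "fps_ln 1 oo (fps_exp 1 - 1) = (fps_X :: real fps)"
    using fps_inv[of "fps_exp (1::real) - 1"] by (simp add: fps_ln_fps_exp_inv)
  hence "mult_ext (phiL br) (psiL br a) = word [a]" for a
    unfolding phiL_eq_hoffman_letter psiL_eq_hoffman_letter
    by (simp add: mult_ext_hoffman_letter[OF assms(1,2)] hoffman_letter_fps_X)
  with assms show ?thesis
    unfolding PhiH_def PsiH_def phiL_eq_hoffman_letter psiL_eq_hoffman_letter
    by (simp add: mult_ext_mult_ext hoffman_letter_in_Tset mult_ext_letters)
qed

section \<open>Words acting on vector fields\<close>

fun act_word :: "('a \<Rightarrow> real^'e \<Rightarrow> real^'e) \<Rightarrow> 'a list
                   \<Rightarrow> (real^'e \<Rightarrow> real^'e) \<Rightarrow> (real^'e \<Rightarrow> real^'e)" where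
  "act_word F [] k = k"
| "act_word F (a # v) k = vf_act (F a) (act_word F v k)"

definition act_T :: "('a \<Rightarrow> real^'e \<Rightarrow> real^'e) \<Rightarrow> ('a list \<Rightarrow> real)
                     \<Rightarrow> (real^'e \<Rightarrow> real^'e) \<Rightarrow> (real^'e \<Rightarrow> real^'e)" where
  "act_T F x k = (\<lambda>p. lincomb x (\<lambda>v. act_word F v k p))"

lemma fW_eq_act_word: "fW F v = act_word F v id"
  by (induction F v rule: fW.induct) (simp_all add: vf_act_id[unfolded id_def])

lemma act_word_append: "act_word F (v @ u) k = act_word F v (act_word F u k)"
  by (induction v) auto

lemma smooth_vf_act_word: "(\<And>a. smooth_vf (F a)) \<Longrightarrow> smooth_vf k \<Longrightarrow> smooth_vf (act_word F v k)"
  by (induction v) (auto intro: smooth_vf_act)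

lemma smooth_vf_lincomb: "(\<And>v. smooth_vf (K v)) \<Longrightarrow> smooth_vf (\<lambda>p. lincomb x (\<lambda>v. K v p))"
  unfolding lincomb_def by (intro smooth_vf_sum smooth_vf_scaleR)

lemma vf_act_lincomb_right:
  assumes "\<And>v. smooth_vf (K v)"
  shows "vf_act g (\<lambda>q. lincomb x (\<lambda>v. K v q)) = (\<lambda>p. lincomb x (\<lambda>v. vf_act g (K v) p))"
proof
  fix p
  have "((\<lambda>q. lincomb x (\<lambda>v. K v q)) has_derivative
          (\<lambda>y. lincomb x (\<lambda>v. frechet_derivative (K v) (at p) y))) (at p)"
    unfolding lincomb_def
    by (intro has_derivative_sum has_derivative_scaleR_right has_derivative_frechet_derivative
        smooth_vf_differentiable assms)
  thus "vf_act g (\<lambda>q. lincomb x (\<lambda>v. K v q)) p = lincomb x (\<lambda>v. vf_act g (K v) p)"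
    by (simp add: vf_act_def frechet_derivative_at[symmetric])
qed

lemma act_word_lincomb:
  assumes "\<And>a. smooth_vf (F a)" and "\<And>v. smooth_vf (K v)"
  shows "act_word F u (\<lambda>q. lincomb x (\<lambda>v. K v q)) = (\<lambda>p. lincomb x (\<lambda>v. act_word F u (K v) p))"
  by (induction u) (simp_all add: vf_act_lincomb_right smooth_vf_act_word assms)

lemma fT_eq_act_T: "fT F x = act_T F x id"
  by (simp add: fT_def act_T_def lincomb_def supp_def fW_eq_act_word)

lemma smooth_vf_act_T: "(\<And>a. smooth_vf (F a)) \<Longrightarrow> smooth_vf k \<Longrightarrow> smooth_vf (act_T F x k)"
  unfolding act_T_def by (intro smooth_vf_lincomb smooth_vf_act_word)

lemma smooth_vf_fT: "(\<And>a. smooth_vf (F a)) \<Longrightarrow> smooth_vf (fT F x)"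
  unfolding fT_eq_act_T by (intro smooth_vf_act_T smooth_vf_id)

lemma act_T_conc:
  assumes "\<And>a. smooth_vf (F a)" and "smooth_vf k" and "x \<in> Tset" and "y \<in> Tset"
  shows "act_T F (conc x y) k = act_T F x (act_T F y k)"
  using assms
  by (simp add: act_T_def lincomb_conc act_word_append act_word_lincomb smooth_vf_act_word)

lemma act_T_commutator:
  assumes "\<And>a. smooth_vf (F a)" and "smooth_vf k" and "x \<in> Tset" and "y \<in> Tset"
  shows "act_T F (commutator x y) k = (\<lambda>p. act_T F x (act_T F y k) p - act_T F y (act_T F x k) p)"
  using assms unfolding commutator_def
  by (simp add: act_T_def[of F "\<lambda>w. _ w - _ w"] lincomb_diff conc_in_Tset act_T_conc[symmetric])
     (simp add: act_T_def)

lemma act_T_tadd: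
  "x \<in> Tset \<Longrightarrow> y \<in> Tset \<Longrightarrow> act_T F (tadd x y) k = (\<lambda>p. act_T F x k p + act_T F y k p)"
  by (simp add: act_T_def lincomb_tadd)

lemma act_T_tscale: "x \<in> Tset \<Longrightarrow> act_T F (tscale c x) k = (\<lambda>p. c *\<^sub>R act_T F x k p)"
  by (simp add: act_T_def lincomb_tscale)

lemma act_T_word: "act_T F (word v) k = act_word F v k"
  by (simp add: act_T_def lincomb_word)

lemma fT_tadd: "x \<in> Tset \<Longrightarrow> y \<in> Tset \<Longrightarrow> fT F (tadd x y) = (\<lambda>p. fT F x p + fT F y p)"
  by (simp add: fT_eq_act_T act_T_tadd)

lemma fT_tscale: "x \<in> Tset \<Longrightarrow> fT F (tscale c x) = (\<lambda>p. c *\<^sub>R fT F x p)"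
  by (simp add: fT_eq_act_T act_T_tscale)

lemma fT_letter: "fT F (word [a]) = F a"
  by (simp add: fT_eq_act_T act_T_word vf_act_id)

lemma act_T_commutator_vf_bracket:
  assumes F: "\<And>a. smooth_vf (F a)" and xy: "x \<in> Tset" "y \<in> Tset"
    and hx: "\<And>k. smooth_vf k \<Longrightarrow> act_T F x k = vf_act (fT F x) k"
    and hy: "\<And>k. smooth_vf k \<Longrightarrow> act_T F y k = vf_act (fT F y) k"
    and k: "smooth_vf k"
  shows "act_T F (commutator x y) k = vf_act (vf_bracket (fT F x) (fT F y)) k"
proof -
  have "act_T F (commutator x y) k
      = (\<lambda>p. vf_act (fT F x) (vf_act (fT F y) k) p - vf_act (fT F y) (vf_act (fT F x) k) p)"
    by (simp add: act_T_commutator[OF F k xy] hx hy k smooth_vf_act smooth_vf_fT F)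
  also have "\<dots> = vf_act (vf_bracket (fT F x) (fT F y)) k"
    using vf_act_vf_bracket[OF smooth_vf_fT[of F x, OF F] smooth_vf_fT[of F y, OF F] k]
    by (simp add: fun_eq_iff)
  finally show ?thesis .
qed

lemma fT_commutator_vf_bracket:
  assumes F: "\<And>a. smooth_vf (F a)" and xy: "x \<in> Tset" "y \<in> Tset"
    and hx: "\<And>k. smooth_vf k \<Longrightarrow> act_T F x k = vf_act (fT F x) k"
    and hy: "\<And>k. smooth_vf k \<Longrightarrow> act_T F y k = vf_act (fT F y) k"
  shows "fT F (commutator x y) = vf_bracket (fT F x) (fT F y)"
  using act_T_commutator_vf_bracket[OF assms smooth_vf_id]
  by (simp add: fT_eq_act_T[of F "commutator x y"] vf_act_id)

lemma act_T_LieA: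
  assumes F: "\<And>a. smooth_vf (F a)"
  shows "x \<in> LieA \<Longrightarrow> smooth_vf k \<Longrightarrow> act_T F x k = vf_act (fT F x) k"
proof (induction x arbitrary: k rule: LieA.induct)
  case (gen a)
  thus ?case by (simp add: act_T_word fT_letter)
next
  case (add x y)
  have xy: "x \<in> Tset" "y \<in> Tset" using add.hyps LieA_subset_Tset by auto
  show ?case
    using add.IH add.prems by (simp add: act_T_tadd[OF xy] fT_tadd[OF xy] vf_act_add_left)
next
  case (scale x c)
  have x: "x \<in> Tset" using scale.hyps LieA_subset_Tset by auto
  show ?case
    using scale.IH scale.prems by (simp add: act_T_tscale[OF x] fT_tscale[OF x] vf_act_scaleR_left)
next
  case (brk x y)
  have xy: "x \<in> Tset" "y \<in> Tset" using brk.hyps LieA_subset_Tset by auto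
  have "fT F (commutator x y) = vf_bracket (fT F x) (fT F y)"
    by (rule fT_commutator_vf_bracket[OF F xy brk.IH])
  with act_T_commutator_vf_bracket[OF F xy brk.IH brk.prems] show ?case by simp
qed

lemma fT_commutator:
  assumes "\<And>a. smooth_vf (F a)" and "x \<in> LieA" and "y \<in> LieA"
  shows "fT F (commutator x y) = vf_bracket (fT F x) (fT F y)"
  using assms LieA_subset_Tset by (blast intro: fT_commutator_vf_bracket act_T_LieA)

lemma PsiH_in_Tset: "weight_ok br \<omega> \<Longrightarrow> x \<in> Tset \<Longrightarrow> PsiH br x \<in> Tset"
  unfolding PsiH_def psiL_eq_hoffman_letter by (intro mult_ext_in_Tset hoffman_letter_in_Tset)

lemma PhiH_in_Tset: "weight_ok br \<omega> \<Longrightarrow> x \<in> Tset \<Longrightarrow> PhiH br x \<in> Tset"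
  unfolding PhiH_def phiL_eq_hoffman_letter by (intro mult_ext_in_Tset hoffman_letter_in_Tset)

lemma LieHat_subset_Tset: "weight_ok br \<omega> \<Longrightarrow> LieHat br \<subseteq> Tset"
  using LieA_subset_Tset by (auto simp: LieHat_def intro: PsiH_in_Tset)

lemma PsiH_commutator:
  "weight_ok br \<omega> \<Longrightarrow> x \<in> Tset \<Longrightarrow> y \<in> Tset
    \<Longrightarrow> PsiH br (commutator x y) = commutator (PsiH br x) (PsiH br y)"
  unfolding PsiH_def psiL_eq_hoffman_letter by (intro mult_ext_commutator hoffman_letter_in_Tset)

lemma PsiH_tadd: "x \<in> Tset \<Longrightarrow> y \<in> Tset \<Longrightarrow> PsiH br (tadd x y) = tadd (PsiH br x) (PsiH br y)"
  unfolding PsiH_def by (rule mult_ext_tadd)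

lemma PsiH_tscale: "x \<in> Tset \<Longrightarrow> PsiH br (tscale c x) = tscale c (PsiH br x)"
  unfolding PsiH_def by (rule mult_ext_tscale)

lemma fhat_PsiH:
  "bracket_assoc br \<Longrightarrow> weight_ok br \<omega> \<Longrightarrow> x \<in> Tset \<Longrightarrow> fhat br F (PsiH br x) = fT F x"
  by (simp add: fhat_def PhiH_PsiH)

lemma linear_on_T_fhat:
  assumes "weight_ok br \<omega>"
  shows "linear_on_T (fhat br F) Tset"
  unfolding linear_on_T_def
proof (intro conjI ballI allI)
  fix x y :: "'a list \<Rightarrow> real" assume xy: "x \<in> Tset" "y \<in> Tset"
  have "PhiH br (tadd x y) = tadd (PhiH br x) (PhiH br y)"
    unfolding PhiH_def using xy by (rule mult_ext_tadd)
  thus "fhat br F (tadd x y) = (\<lambda>p. fhat br F x p + fhat br F y p)"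
    unfolding fhat_def using PhiH_in_Tset[OF assms] xy by (simp add: fT_tadd)
next
  fix c and x :: "'a list \<Rightarrow> real" assume x: "x \<in> Tset"
  have "PhiH br (tscale c x) = tscale c (PhiH br x)"
    unfolding PhiH_def using x by (rule mult_ext_tscale)
  thus "fhat br F (tscale c x) = (\<lambda>p. c *\<^sub>R fhat br F x p)"
    unfolding fhat_def using PhiH_in_Tset[OF assms] x by (simp add: fT_tscale)
qed

lemma lie_morph_on_fhat:
  assumes "bracket_assoc br" and "weight_ok br \<omega>" and F: "\<And>a. smooth_vf (F a)"
  shows "lie_morph_on (fhat br F) (LieHat br)"
  unfolding lie_morph_on_def
proof (intro conjI ballI)
  show "linear_on_T (fhat br F) (LieHat br)"
    using linear_on_T_fhat[OF assms(2)] LieHat_subset_Tset[OF assms(2)]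
    unfolding linear_on_T_def by blast
  show "smooth_vf (fhat br F X)" for X
    unfolding fhat_def by (rule smooth_vf_fT[OF F])
  fix X Y assume "X \<in> LieHat br" "Y \<in> LieHat br"
  then obtain x y where x: "x \<in> LieA" "X = PsiH br x" and y: "y \<in> LieA" "Y = PsiH br y"
    unfolding LieHat_def by blast
  hence xy: "x \<in> Tset" "y \<in> Tset" using LieA_subset_Tset by auto
  show "fhat br F (commutator X Y) = vf_bracket (fhat br F X) (fhat br F Y)"
    unfolding x(2) y(2) PsiH_commutator[OF assms(2) xy, symmetric]
    using assms xy by (simp add: fhat_PsiH commutator_in_Tset fT_commutator x(1) y(1))
qed

lemma lie_morph_on_LieHat_unique:
  assumes wok: "weight_ok br \<omega>"
    and g: "lie_morph_on g (LieHat br)" and h: "lie_morph_on h (LieHat br)"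
    and letters: "\<And>a. g (PsiH br (word [a])) = h (PsiH br (word [a]))"
    and X: "X \<in> LieHat br"
  shows "g X = h X"
proof -
  have "g (PsiH br x) = h (PsiH br x)" if "x \<in> LieA" for x
    using that
  proof (induction x rule: LieA.induct)
    case (gen a) thus ?case by (rule letters)
  next
    case (add x y)
    have "PsiH br x \<in> LieHat br" "PsiH br y \<in> LieHat br" using add.hyps by (auto simp: LieHat_def)
    moreover have "PsiH br (tadd x y) = tadd (PsiH br x) (PsiH br y)"
      using add.hyps LieA_subset_Tset by (auto intro: PsiH_tadd)
    ultimately show ?case
      using g h add.IH by (simp add: lie_morph_on_def linear_on_T_def)
  next
    case (scale x c)
    have "PsiH br x \<in> LieHat br" using scale.hyps by (auto simp: LieHat_def)
    moreover have "PsiH br (tscale c x) = tscale c (PsiH br x)"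
      using scale.hyps LieA_subset_Tset by (auto intro: PsiH_tscale)
    ultimately show ?case
      using g h scale.IH by (simp add: lie_morph_on_def linear_on_T_def)
  next
    case (brk x y)
    have "PsiH br x \<in> LieHat br" "PsiH br y \<in> LieHat br" using brk.hyps by (auto simp: LieHat_def)
    moreover have "PsiH br (commutator x y) = commutator (PsiH br x) (PsiH br y)"
      using brk.hyps LieA_subset_Tset by (auto intro: PsiH_commutator[OF wok])
    ultimately show ?case
      using g h brk.IH by (simp add: lie_morph_on_def)
  qed
  thus ?thesis using X unfolding LieHat_def by blast
qed

theorem proposition3p16:
  fixes br :: "'a \<Rightarrow> 'a \<Rightarrow> 'a option" and \<omega> :: "'a \<Rightarrow> nat"
    and F :: "'a \<Rightarrow> real^'e \<Rightarrow> real^'e"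
  assumes "bracket_comm br" and "bracket_assoc br" and "weight_ok br \<omega>"
    and "\<forall>a. smooth_vf (F a)"
  shows "linear_on_T (fhat br F) Tset
       \<and> (\<forall>x\<in>Tset. smooth_vf (fhat br F x))
       \<and> lie_morph_on (fhat br F) (LieHat br)
       \<and> (\<forall>a. fhat br F (PsiH br (word [a])) = F a)
       \<and> (\<forall>g. lie_morph_on g (LieHat br) \<and> (\<forall>a. g (PsiH br (word [a])) = F a)
              \<longrightarrow> (\<forall>x\<in>LieHat br. g x = fhat br F x))"
proof -
  have F: "\<And>a. smooth_vf (F a)" using assms(4) by blast
  have morph: "lie_morph_on (fhat br F) (LieHat br)"
    by (rule lie_morph_on_fhat[OF assms(2,3) F])
  have letters: "fhat br F (PsiH br (word [a])) = F a" for a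
    by (simp add: fhat_PsiH[OF assms(2,3) word_in_Tset] fT_letter)
  have smooth: "smooth_vf (fhat br F x)" for x
    unfolding fhat_def by (rule smooth_vf_fT[OF F])
  show ?thesis
    using linear_on_T_fhat[OF assms(3)] smooth morph letters
      lie_morph_on_LieHat_unique[OF assms(3) _ morph]
    by metis
qed

end
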